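(* Let $d \geq 2$ and let $k, j, \ell \in \mathbb{Z}^d \setminus \{0\}$. If $|k| - |j| + |\ell| \neq 0$, then \[ \Big| \frac{1}{|k| - |j| + |\ell|} \Big| \leq C\, |j|^2 |\ell| . \] If $|k| - |j| - |\ell| \neq 0$, then \[ \Big| \frac{1}{|k| - |j| - |\ell|} \Big| \leq C\, |j|\, |\ell|\, (|j| + |\ell|). \] Here $C$ is a universal constant; $C = 27$ suffices.
   Context: $|\cdot|$ denotes the Euclidean norm on $\mathbb{Z}^d \subset \mathbb{R}^d$. *)

theory Defs
  imports "HOL-Analysis.Analysis"
begin

definition lnorm :: "int ^ 'n \<Rightarrow> real" where
  "lnorm k = norm (\<chi> i. real_of_int (k $ i))"

end

theory Submission
  imports Defs
begin

text \<open>
  Let \<open>s, t, u \<ge> 1\<close> have integer squares and put \<open>w = t \<mp> u\<close>, so \<open>w\<^sup>2 = n + e\<close> with \<open>n\<close> an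
  integer and \<open>e = \<mp>2tu\<close> a real whose square \<open>4t\<^sup>2u\<^sup>2\<close> is an integer. Then
  \<open>z = (s - w)(s + w) = m - e\<close> with \<open>m\<close> an integer, and the conjugate product
  \<open>(m - e)(m + e) = m\<^sup>2 - e\<^sup>2\<close> is an integer. Hence a nonzero \<open>z\<close> satisfies
  \<open>1 \<le> |z| (|z| + 2|e|)\<close>, and dividing by \<open>s + w\<close> bounds \<open>1 / |s - w|\<close> polynomially in \<open>t\<close>
  and \<open>u\<close> whenever \<open>|s - w| < 1\<close>.
\<close>

lemma int_add_sqrt_int_separation:
  fixes e :: real and m q :: int
  assumes e_sq: "e\<^sup>2 = of_int q" and nonzero: "of_int m + e \<noteq> 0"
  shows "1 \<le> \<bar>of_int m + e\<bar> * (\<bar>of_int m + e\<bar> + 2 * \<bar>e\<bar>)"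
proof (cases "of_int m - e = 0")
  case True
  then have z_int: "of_int m + e = of_int (2 * m)" by simp
  with nonzero have "1 \<le> \<bar>2 * m\<bar>" by auto
  then have "1 \<le> \<bar>of_int m + e\<bar>" unfolding z_int by simp
  then show ?thesis by (simp add: mult_ge1_I)
next
  case False
  have conj_prod: "(of_int m + e) * (of_int m - e) = of_int (m\<^sup>2 - q)"
    using e_sq by (simp add: algebra_simps power2_eq_square)
  with nonzero False have "m\<^sup>2 - q \<noteq> 0" by auto
  then have "1 \<le> \<bar>m\<^sup>2 - q\<bar>" by linarith
  then have "1 \<le> \<bar>(of_int m + e) * (of_int m - e)\<bar>"
    unfolding conj_prod by (simp only: of_int_abs[symmetric] of_int_1_le_iff)
  then have "1 \<le> \<bar>of_int m + e\<bar> * \<bar>of_int m - e\<bar>"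
    by (simp add: abs_mult)
  also have "\<dots> \<le> \<bar>of_int m + e\<bar> * (\<bar>of_int m + e\<bar> + 2 * \<bar>e\<bar>)"
    by (intro mult_left_mono) linarith+
  finally show ?thesis .
qed

lemma abs_inverse_le_of_one_le_mult:
  fixes x P :: real
  assumes "1 \<le> \<bar>x\<bar> * P"
  shows "\<bar>1 / x\<bar> \<le> P"
proof -
  have "x \<noteq> 0" using assms by auto
  with assms show ?thesis by (simp add: divide_le_eq mult.commute)
qed

lemma abs_inverse_diff_sqrt_int_le:
  fixes s w e :: real and a n q :: int
  assumes s_sq: "s\<^sup>2 = of_int a" and w_sq: "w\<^sup>2 = of_int n + e" and e_sq: "e\<^sup>2 = of_int q"
    and "s > 0" "w \<ge> 0" and close: "\<bar>s - w\<bar> < 1"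
  shows "\<bar>1 / (s - w)\<bar> \<le> (2 * w + 1) * (2 * w + 1 + 2 * \<bar>e\<bar>)"
proof (cases "s = w")
  case True
  with \<open>w \<ge> 0\<close> show ?thesis by simp
next
  case False
  define z where "z = (s - w) * (s + w)"
  have z_eq: "z = of_int (a - n) + (- e)"
    using s_sq w_sq by (simp add: z_def algebra_simps power2_eq_square)
  have abs_z: "\<bar>z\<bar> = \<bar>s - w\<bar> * (s + w)"
    using \<open>s > 0\<close> \<open>w \<ge> 0\<close> by (simp add: z_def abs_mult)
  have sum_le: "s + w \<le> 2 * w + 1" using close by linarith
  have abs_z_le: "\<bar>z\<bar> \<le> 2 * w + 1"
    using abs_z close sum_le \<open>s > 0\<close> \<open>w \<ge> 0\<close> mult_left_le_one_le[of "s + w" "\<bar>s - w\<bar>"]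
    by linarith
  have "z \<noteq> 0" using False \<open>s > 0\<close> \<open>w \<ge> 0\<close> by (simp add: z_def)
  then have "1 \<le> \<bar>z\<bar> * (\<bar>z\<bar> + 2 * \<bar>e\<bar>)"
    using int_add_sqrt_int_separation[of "- e" q "a - n"] e_sq z_eq by simp
  also have "\<dots> \<le> \<bar>z\<bar> * (2 * w + 1 + 2 * \<bar>e\<bar>)"
    using abs_z_le by (simp add: mult_left_mono)
  also have "\<dots> = \<bar>s - w\<bar> * ((s + w) * (2 * w + 1 + 2 * \<bar>e\<bar>))"
    by (simp add: abs_z)
  also have "\<dots> \<le> \<bar>s - w\<bar> * ((2 * w + 1) * (2 * w + 1 + 2 * \<bar>e\<bar>))"
    using sum_le \<open>w \<ge> 0\<close> by (simp add: mult_left_mono mult_right_mono)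
  finally show ?thesis by (rule abs_inverse_le_of_one_le_mult)
qed

lemma abs_inverse_le_one:
  fixes x :: real
  assumes "1 \<le> \<bar>x\<bar>"
  shows "\<bar>1 / x\<bar> \<le> 1"
  using assms by (intro abs_inverse_le_of_one_le_mult) simp

lemma abs_inverse_diff_add_sqrt_int_le:
  fixes s t u :: real and a b c :: int
  assumes "1 \<le> s" "1 \<le> t" "1 \<le> u"
    and "s\<^sup>2 = of_int a" and t_sq: "t\<^sup>2 = of_int b" and u_sq: "u\<^sup>2 = of_int c"
  shows "\<bar>1 / (s - t + u)\<bar> \<le> 27 * t\<^sup>2 * u"
proof (cases "\<bar>s - t + u\<bar> < 1")
  case True
  then have "0 \<le> t - u" using \<open>1 \<le> s\<close> by linarith
  have "(t - u)\<^sup>2 = of_int (b + c) + (- 2 * t * u)"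
    using t_sq u_sq by (simp add: power2_eq_square algebra_simps)
  moreover have "(- 2 * t * u)\<^sup>2 = of_int (4 * b * c)"
    using t_sq u_sq by (simp add: power_mult_distrib)
  ultimately have "\<bar>1 / (s - (t - u))\<bar>
      \<le> (2 * (t - u) + 1) * (2 * (t - u) + 1 + 2 * \<bar>- 2 * t * u\<bar>)"
    using True \<open>0 \<le> t - u\<close> assms
    by (intro abs_inverse_diff_sqrt_int_le[where a = a and n = "b + c" and q = "4 * b * c"])
      (simp_all add: algebra_simps)
  also have "\<dots> \<le> (2 * t) * (6 * (t * u))"
  proof -
    have "t \<le> t * u" using assms mult_left_mono[of 1 u t] by simp
    moreover have "\<bar>- 2 * t * u\<bar> = 2 * (t * u)" using assms by simp
    ultimately have "2 * (t - u) + 1 + 2 * \<bar>- 2 * t * u\<bar> \<le> 6 * (t * u)"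
      using \<open>1 \<le> u\<close> by argo
    then show ?thesis
      using assms \<open>0 \<le> t - u\<close> by (intro mult_mono) simp_all
  qed
  also have "\<dots> = 12 * (t\<^sup>2 * u)" by (simp add: power2_eq_square)
  also have "\<dots> \<le> 27 * (t\<^sup>2 * u)" using \<open>1 \<le> u\<close> by simp
  finally show ?thesis by (simp add: algebra_simps)
next
  case False
  then have "\<bar>1 / (s - t + u)\<bar> \<le> 1" by (intro abs_inverse_le_one) simp
  also have "1 \<le> 27 * t\<^sup>2 * u"
    using one_le_power[OF \<open>1 \<le> t\<close>, of 2] \<open>1 \<le> u\<close> by (intro mult_ge1_I) simp_all
  finally show ?thesis .
qed

lemma abs_inverse_diff_diff_sqrt_int_le:
  fixes s t u :: real and a b c :: int
  assumes "1 \<le> s" "1 \<le> t" "1 \<le> u"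
    and "s\<^sup>2 = of_int a" and t_sq: "t\<^sup>2 = of_int b" and u_sq: "u\<^sup>2 = of_int c"
  shows "\<bar>1 / (s - t - u)\<bar> \<le> 27 * t * u * (t + u)"
proof (cases "\<bar>s - t - u\<bar> < 1")
  case True
  have "(t + u)\<^sup>2 = of_int (b + c) + 2 * t * u"
    using t_sq u_sq by (simp add: power2_eq_square algebra_simps)
  moreover have "(2 * t * u)\<^sup>2 = of_int (4 * b * c)"
    using t_sq u_sq by (simp add: power_mult_distrib)
  ultimately have "\<bar>1 / (s - (t + u))\<bar>
      \<le> (2 * (t + u) + 1) * (2 * (t + u) + 1 + 2 * \<bar>2 * t * u\<bar>)"
    using True assms
    by (intro abs_inverse_diff_sqrt_int_le[where a = a and n = "b + c" and q = "4 * b * c"])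
      (simp_all add: algebra_simps)
  also have "\<dots> \<le> (3 * (t + u)) * (9 * t * u)"
  proof (intro mult_mono)
    have "t + u \<le> t * u + 1"
      using mult_nonneg_nonneg[of "t - 1" "u - 1"] assms by (simp add: algebra_simps)
    then show "2 * (t + u) + 1 + 2 * \<bar>2 * t * u\<bar> \<le> 9 * t * u"
      using assms mult_ge1_I[of t u] by (simp add: abs_mult)
  qed (use assms in auto)
  also have "\<dots> = 27 * t * u * (t + u)" by simp
  finally show ?thesis by (simp add: algebra_simps)
next
  case False
  then have "\<bar>1 / (s - t - u)\<bar> \<le> 1" by (intro abs_inverse_le_one) simp
  also have "1 \<le> 27 * t * u * (t + u)"
    using assms mult_ge1_I[of t u] mult_ge1_I[of "t * u" "t + u"] by simp
  finally show ?thesis .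
qed

lemma lnorm_power2: "lnorm k ^ 2 = of_int (\<Sum>i\<in>UNIV. (k $ i)\<^sup>2)"
proof -
  have "lnorm k ^ 2 = (\<chi> i. real_of_int (k $ i)) \<bullet> (\<chi> i. real_of_int (k $ i))"
    unfolding lnorm_def by (simp add: power2_norm_eq_inner)
  also have "\<dots> = of_int (\<Sum>i\<in>UNIV. (k $ i)\<^sup>2)"
    by (simp add: inner_vec_def power2_eq_square)
  finally show ?thesis .
qed

lemma lnorm_ge_one:
  assumes "k \<noteq> 0"
  shows "1 \<le> lnorm k"
proof -
  have "(\<chi> i. real_of_int (k $ i)) \<noteq> 0"
    using assms by (auto simp: vec_eq_iff)
  then have "0 < lnorm k" by (simp add: lnorm_def)
  then have "0 < (\<Sum>i\<in>UNIV. (k $ i)\<^sup>2)"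
    using lnorm_power2[of k] by (metis of_int_0_less_iff zero_less_power)
  then have "1 \<le> lnorm k ^ 2"
    unfolding lnorm_power2 by (simp only: of_int_1_le_iff)
  then show ?thesis using \<open>0 < lnorm k\<close> abs_le_square_iff[of 1 "lnorm k"] by simp
qed

theorem lemma5p3:
  fixes k j l :: "int ^ 'n"
  assumes "CARD('n) \<ge> 2"
    and "k \<noteq> 0" and "j \<noteq> 0" and "l \<noteq> 0"
  shows "(lnorm k - lnorm j + lnorm l \<noteq> 0 \<longrightarrow>
            \<bar>1 / (lnorm k - lnorm j + lnorm l)\<bar> \<le> 27 * lnorm j ^ 2 * lnorm l)
       \<and> (lnorm k - lnorm j - lnorm l \<noteq> 0 \<longrightarrow>
            \<bar>1 / (lnorm k - lnorm j - lnorm l)\<bar> \<le> 27 * lnorm j * lnorm l * (lnorm j + lnorm l))"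
proof -
  have "1 \<le> lnorm k" "1 \<le> lnorm j" "1 \<le> lnorm l"
    using assms lnorm_ge_one by blast+
  then show ?thesis
    using abs_inverse_diff_add_sqrt_int_le[OF _ _ _ lnorm_power2 lnorm_power2 lnorm_power2]
      abs_inverse_diff_diff_sqrt_int_le[OF _ _ _ lnorm_power2 lnorm_power2 lnorm_power2]
    by blast
qed

end
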